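(* Let $\bar{\mathcal{A}}=(\bar A_1,\dots,\bar A_4)$ be a quadruple of $5\times5$ alternating complex matrices, and suppose the scheme $\bar C\subset\mathbb{P}^3$ cut out by the five $4\times4$ principal sub-Pfaffians of $\bar{\mathcal{A}}(\mathbf{x})=\sum_k\bar A_kx_k$ has a positive-dimensional Zariski tangent space at some point $\bar p$. Then there exist $\bar\gamma\in U_4(\mathbb{C})\times U_5(\mathbb{C})$, an integer $1\le K\le4$ and distinct integers $1\le I,J,L\le5$ such that $\bar{\mathcal{B}}=\bar\gamma(\bar{\mathcal{A}})$ satisfies either (A) $\bar B_K=0$; or (B) $\bar B_k\neq0$ for all $k$, the entries $\bar b^{(K)}_{iI},\bar b^{(K)}_{iJ},\bar b^{(K)}_{iL}$ vanish for all $1\le i\le5$, and either (i) $\bar{\mathcal{B}}(\mathbf{x})_{IL}=\bar{\mathcal{B}}(\mathbf{x})_{JL}=0$, or (ii) $\bar{\mathcal{B}}(\mathbf{x})_{IJ}=0$ and the linear forms $\bar{\mathcal{B}}(\mathbf{x})_{IL}$ and $\bar{\mathcal{B}}(\mathbf{x})_{JL}$ are linearly independent.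
   Context: $U_n\subset\mathrm{GL}_n$ is the subgroup of lower triangular unipotent matrices. A pair $(g_4,g_5)\in U_4(\mathbb{C})\times U_5(\mathbb{C})$ acts on quadruples of alternating matrices by $(A_1,\dots,A_4)^t\mapsto g_4(A_1,\dots,A_4)^t$ (i.e. $A_k\mapsto\sum_l(g_4)_{kl}A_l$) and $A_k\mapsto g_5A_kg_5^t$. For a quadruple $\mathcal{B}=(B_1,\dots,B_4)$, $b^{(k)}_{ij}$ denotes the $(i,j)$ entry of $B_k$, and $\mathcal{B}(\mathbf{x})_{ij}=\sum_kb^{(k)}_{ij}x_k$ is the linear form in the $(i,j)$ entry of $\mathcal{B}(\mathbf{x})=\sum_kB_kx_k$. *)

theory Defs
  imports Complex_Main
begin

text \<open>Conventions: a quadruple of 5x5 complex matrices is a function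
  A :: nat => nat => nat => complex, where A k i j is the (i,j) entry of A_k,
  with 1 <= k <= 4 and 1 <= i, j <= 5 (values outside this range are ignored).
  A point / vector of C^4 is a function x :: nat => complex, using x 1 .. x 4.\<close>

definition alternating5 :: "(nat \<Rightarrow> nat \<Rightarrow> complex) \<Rightarrow> bool" where
  "alternating5 M \<longleftrightarrow>
     (\<forall>i\<in>{1..5}. M i i = 0) \<and> (\<forall>i\<in>{1..5}. \<forall>j\<in>{1..5}. M j i = - M i j)"

definition linform :: "(nat \<Rightarrow> nat \<Rightarrow> nat \<Rightarrow> complex) \<Rightarrow> nat \<Rightarrow> nat \<Rightarrow> (nat \<Rightarrow> complex) \<Rightarrow> complex" where
  "linform A i j x = (\<Sum>k=1..4. A k i j * x k)"

definition pf4 :: "(nat \<Rightarrow> nat \<Rightarrow> complex) \<Rightarrow> nat \<Rightarrow> nat \<Rightarrow> nat \<Rightarrow> nat \<Rightarrow> complex" where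
  "pf4 M a b c d = M a b * M c d - M a c * M b d + M a d * M b c"

definition subpf :: "(nat \<Rightarrow> nat \<Rightarrow> nat \<Rightarrow> complex) \<Rightarrow> nat \<Rightarrow> (nat \<Rightarrow> complex) \<Rightarrow> complex" where
  "subpf A m x =
     (let r = filter (\<lambda>i. i \<noteq> m) [1..<6]
      in pf4 (\<lambda>i j. linform A i j x) (r!0) (r!1) (r!2) (r!3))"

text \<open>p (nonzero in C^4) represents a point of the scheme C in P^3 cut out by the
  five principal sub-Pfaffians.\<close>
definition on_pfaff_scheme :: "(nat \<Rightarrow> nat \<Rightarrow> nat \<Rightarrow> complex) \<Rightarrow> (nat \<Rightarrow> complex) \<Rightarrow> bool" where
  "on_pfaff_scheme A p \<longleftrightarrow>
     (\<exists>k\<in>{1..4}. p k \<noteq> 0) \<and> (\<forall>m\<in>{1..5}. subpf A m p = 0)"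

text \<open>v lies in the Zariski tangent space of the affine cone over C at p: the
  differential at p of every defining Pfaffian vanishes in direction v.\<close>
definition cone_tangent :: "(nat \<Rightarrow> nat \<Rightarrow> nat \<Rightarrow> complex) \<Rightarrow> (nat \<Rightarrow> complex) \<Rightarrow> (nat \<Rightarrow> complex) \<Rightarrow> bool" where
  "cone_tangent A p v \<longleftrightarrow>
     (\<forall>m\<in>{1..5}. ((\<lambda>t. subpf A m (\<lambda>k. p k + t * v k)) has_field_derivative 0) (at 0))"

text \<open>The Zariski tangent space of C at [p] has dimension (dim of cone tangent space) - 1;
  it is positive-dimensional iff the cone tangent space contains two linearly
  independent vectors of C^4.\<close>
definition tangent_pos_dim :: "(nat \<Rightarrow> nat \<Rightarrow> nat \<Rightarrow> complex) \<Rightarrow> (nat \<Rightarrow> complex) \<Rightarrow> bool" where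
  "tangent_pos_dim A p \<longleftrightarrow>
     (\<exists>v w. cone_tangent A p v \<and> cone_tangent A p w \<and>
        (\<forall>a b. (\<forall>k\<in>{1..4}. a * v k + b * w k = 0) \<longrightarrow> a = 0 \<and> b = 0))"

definition unipotent_lower :: "nat \<Rightarrow> (nat \<Rightarrow> nat \<Rightarrow> complex) \<Rightarrow> bool" where
  "unipotent_lower n g \<longleftrightarrow>
     (\<forall>i\<in>{1..n}. \<forall>j\<in>{1..n}. (i < j \<longrightarrow> g i j = 0) \<and> (i = j \<longrightarrow> g i j = 1))"

definition act :: "(nat \<Rightarrow> nat \<Rightarrow> complex) \<Rightarrow> (nat \<Rightarrow> nat \<Rightarrow> complex) \<Rightarrow>
    (nat \<Rightarrow> nat \<Rightarrow> nat \<Rightarrow> complex) \<Rightarrow> (nat \<Rightarrow> nat \<Rightarrow> nat \<Rightarrow> complex)" where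
  "act g4 g5 A = (\<lambda>k i j. \<Sum>l=1..4. g4 k l *
      (\<Sum>a=1..5. \<Sum>b=1..5. g5 i a * A l a b * g5 j b))"

end

theory Submission
  imports Defs
begin

text \<open>
  The point p lies on C exactly when all 4x4 Pfaffians of M = A(p) vanish, i.e. M has rank
  at most two, and a vector v is tangent when the polarised Pfaffians of (M, A(v)) vanish.
  Taking K to be the last nonzero coordinate of p, a unipotent g4 makes B_K proportional to
  g5 M g5^T; if M = 0 this is case (A). Otherwise a unipotent g0 brings M to the normal form
  m (e_a e_b^T - e_b e_a^T), and the polarised Pfaffians then force the entries (c, d) of
  g0 A(v) g0^T with c, d outside {a, b} to vanish. So for the three indices c1 < c2 < c3
  outside {a, b} the linear forms in the entries (c2, c3), (c1, c3), (c1, c2) vanish on a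
  two-dimensional space of tangent vectors and are therefore linearly dependent. A unipotent
  change of the coordinates c1, c2, c3, which keeps the columns c1, c2, c3 of B_K zero, then
  makes two of them vanish, or one vanish and the other two independent. This is case (B)
  unless some B_k vanishes, which is case (A).
\<close>

section \<open>Polarised 4x4 Pfaffians\<close>

definition pf4_polar :: "(nat \<Rightarrow> nat \<Rightarrow> complex) \<Rightarrow> (nat \<Rightarrow> nat \<Rightarrow> complex) \<Rightarrow>
    nat \<Rightarrow> nat \<Rightarrow> nat \<Rightarrow> nat \<Rightarrow> complex" where
  "pf4_polar X Y i j k l = X i j * Y k l + Y i j * X k l - X i k * Y j l - Y i k * X j l
     + X i l * Y j k + Y i l * X j k"

lemma pf4_polar_self: "pf4_polar X X i j k l = 2 * pf4 X i j k l"
  unfolding pf4_polar_def pf4_def by (simp add: algebra_simps)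

lemma has_field_derivative_pf4:
  "((\<lambda>t. pf4 (\<lambda>i j. M i j + t * N i j) a b c d) has_field_derivative pf4_polar M N a b c d) (at 0)"
  unfolding pf4_def pf4_polar_def by (auto intro!: derivative_eq_intros simp: algebra_simps)

context
  fixes f :: "'a::linorder \<Rightarrow> 'a \<Rightarrow> 'a \<Rightarrow> 'a \<Rightarrow> 'b::{idom, ring_char_0}" and S :: "'a set"
  assumes swap12: "\<And>i j k l. i \<in> S \<Longrightarrow> j \<in> S \<Longrightarrow> k \<in> S \<Longrightarrow> l \<in> S \<Longrightarrow> f j i k l = - f i j k l"
    and swap23: "\<And>i j k l. i \<in> S \<Longrightarrow> j \<in> S \<Longrightarrow> k \<in> S \<Longrightarrow> l \<in> S \<Longrightarrow> f i k j l = - f i j k l"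
    and swap34: "\<And>i j k l. i \<in> S \<Longrightarrow> j \<in> S \<Longrightarrow> k \<in> S \<Longrightarrow> l \<in> S \<Longrightarrow> f i j l k = - f i j k l"
    and zero_increasing: "\<And>i j k l. i \<in> S \<Longrightarrow> j \<in> S \<Longrightarrow> k \<in> S \<Longrightarrow> l \<in> S \<Longrightarrow>
      i < j \<Longrightarrow> j < k \<Longrightarrow> k < l \<Longrightarrow> f i j k l = 0"
begin

lemma alternating4_zero_if_repeated:
  assumes "i \<in> S" "j \<in> S" "k \<in> S" "l \<in> S"
  shows "f i i k l = 0" "f i j j l = 0" "f i j k k = 0"
  using swap12[of i i k l] swap23[of i j j l] swap34[of i j k k] assms
  by (simp_all add: eq_neg_iff_add_eq_0 flip: mult_2)

lemma alternating4_zero_if_first_three_increasing: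
  assumes "i < j" "j < k" and S: "i \<in> S" "j \<in> S" "k \<in> S" "l \<in> S"
  shows "f i j k l = 0"
proof -
  consider "l < i" | "l = i" | "i < l" "l < j" | "l = j" | "j < l" "l < k" | "l = k" | "k < l"
    by fastforce
  then show ?thesis
  proof cases
    case 1
    then show ?thesis
      using zero_increasing[of l i j k] swap34[of i j k l] swap23[of i j l k] swap12[of i l j k] S assms
      by simp
  next
    case 2
    then show ?thesis
      using alternating4_zero_if_repeated(1)[of i _ j k] swap34[of i j k l] swap23[of i j l k] S by simp
  next
    case 3
    then show ?thesis
      using zero_increasing[of i l j k] swap34[of i j k l] swap23[of i j l k] S assms by simp
  next
    case 4
    then show ?thesis using alternating4_zero_if_repeated(2)[of i j _ k] swap34[of i j k l] S by simp
  next
    case 5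
    then show ?thesis using zero_increasing[of i j l k] swap34[of i j k l] S assms by simp
  next
    case 6
    then show ?thesis using alternating4_zero_if_repeated(3) S by simp
  next
    case 7
    then show ?thesis using zero_increasing S assms by simp
  qed
qed

lemma alternating4_zero_if_first_two_increasing:
  assumes "i < j" and S: "i \<in> S" "j \<in> S" "k \<in> S" "l \<in> S"
  shows "f i j k l = 0"
proof -
  consider "k < i" | "k = i" | "i < k" "k < j" | "k = j" | "j < k"
    by fastforce
  then show ?thesis
  proof cases
    case 1
    then show ?thesis
      using alternating4_zero_if_first_three_increasing[of k i j l] swap23[of i j k l] swap12[of i k j l]
        S assms by simp
  next
    case 2
    then show ?thesis
      using alternating4_zero_if_repeated(1)[of i _ j l] swap23[of i j k l] swap12[of i k j l] S by simp
  next
    case 3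
    then show ?thesis
      using alternating4_zero_if_first_three_increasing[of i k j l] swap23[of i j k l] S assms by simp
  next
    case 4
    then show ?thesis using alternating4_zero_if_repeated(2) S by simp
  next
    case 5
    then show ?thesis using alternating4_zero_if_first_three_increasing S assms by simp
  qed
qed

lemma alternating4_zero:
  assumes "i \<in> S" "j \<in> S" "k \<in> S" "l \<in> S"
  shows "f i j k l = 0"
proof -
  consider "i < j" | "i = j" | "j < i" by fastforce
  then show ?thesis
  proof cases
    case 1
    then show ?thesis using alternating4_zero_if_first_two_increasing assms by simp
  next
    case 2
    then show ?thesis using alternating4_zero_if_repeated(1) assms by simp
  next
    case 3
    then show ?thesis
      using alternating4_zero_if_first_two_increasing[of j i k l] swap12[of i j k l] assms by simp
  qed
qed

end

abbreviation pencil ::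
    "(nat \<Rightarrow> nat \<Rightarrow> nat \<Rightarrow> complex) \<Rightarrow> (nat \<Rightarrow> complex) \<Rightarrow> nat \<Rightarrow> nat \<Rightarrow> complex" where
  "pencil A x \<equiv> \<lambda>i j. linform A i j x"

lemma subpf_eq_pf4:
  "subpf A 1 x = pf4 (pencil A x) 2 3 4 5"
  "subpf A 2 x = pf4 (pencil A x) 1 3 4 5"
  "subpf A 3 x = pf4 (pencil A x) 1 2 4 5"
  "subpf A 4 x = pf4 (pencil A x) 1 2 3 5"
  "subpf A 5 x = pf4 (pencil A x) 1 2 3 4"
proof -
  have "[1..<6] = [1::nat, 2, 3, 4, 5]" by (simp add: upt_rec)
  then show "subpf A 1 x = pf4 (pencil A x) 2 3 4 5" "subpf A 2 x = pf4 (pencil A x) 1 3 4 5"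
    "subpf A 3 x = pf4 (pencil A x) 1 2 4 5" "subpf A 4 x = pf4 (pencil A x) 1 2 3 5"
    "subpf A 5 x = pf4 (pencil A x) 1 2 3 4"
    by (simp_all add: subpf_def)
qed

lemma linform_shift: "linform A i j (\<lambda>k. p k + t * v k) = linform A i j p + t * linform A i j v"
  unfolding linform_def by (simp add: algebra_simps sum.distrib sum_distrib_left)

lemma alternating5_pencil:
  assumes "\<forall>k\<in>{1..4}. alternating5 (A k)"
  shows "alternating5 (pencil A x)"
  unfolding alternating5_def linform_def
proof (intro conjI ballI)
  fix i j :: nat
  assume i: "i \<in> {1..5}" and j: "j \<in> {1..5}"
  have "A k j i = - A k i j" if "k \<in> {1..4}" for k
    using assms that i j unfolding alternating5_def by blast
  then have "(\<Sum>k=1..4. A k j i * x k) = (\<Sum>k=1..4. - (A k i j * x k))"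
    by (intro sum.cong) auto
  then show "(\<Sum>k=1..4. A k j i * x k) = - (\<Sum>k=1..4. A k i j * x k)"
    by (simp add: sum_negf)
next
  fix i :: nat
  assume "i \<in> {1..5}"
  then show "(\<Sum>k=1..4. A k i i * x k) = 0"
    using assms unfolding alternating5_def by (intro sum.neutral) simp
qed

lemma pf4_polar_swaps:
  assumes X: "alternating5 X" and Y: "alternating5 Y"
    and "i \<in> {1..5}" "j \<in> {1..5}" "k \<in> {1..5}" "l \<in> {1..5}"
  shows "pf4_polar X Y j i k l = - pf4_polar X Y i j k l" "pf4_polar X Y i k j l = - pf4_polar X Y i j k l"
    "pf4_polar X Y i j l k = - pf4_polar X Y i j k l"
proof -
  have "X j i = - X i j" "Y j i = - Y i j" "X k j = - X j k" "Y k j = - Y j k"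
    "X l k = - X k l" "Y l k = - Y k l"
    using X Y assms(3-6) unfolding alternating5_def by blast+
  then show "pf4_polar X Y j i k l = - pf4_polar X Y i j k l" "pf4_polar X Y i k j l = - pf4_polar X Y i j k l"
    "pf4_polar X Y i j l k = - pf4_polar X Y i j k l"
    unfolding pf4_polar_def by (simp_all add: algebra_simps)
qed

lemma pf4_polar_zero_if_increasing_zero:
  assumes X: "alternating5 X" and Y: "alternating5 Y"
    and zero: "pf4_polar X Y 2 3 4 5 = 0" "pf4_polar X Y 1 3 4 5 = 0" "pf4_polar X Y 1 2 4 5 = 0"
      "pf4_polar X Y 1 2 3 5 = 0" "pf4_polar X Y 1 2 3 4 = 0"
    and "i \<in> {1..5}" "j \<in> {1..5}" "k \<in> {1..5}" "l \<in> {1..5}"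
  shows "pf4_polar X Y i j k l = 0"
proof (rule alternating4_zero[where f = "pf4_polar X Y" and S = "{1..5}"])
  show "pf4_polar X Y i j k l = 0"
    if "i \<in> {1..5}" "j \<in> {1..5}" "k \<in> {1..5}" "l \<in> {1..5}" "i < j" "j < k" "k < l" for i j k l
  proof -
    have "(i, j, k, l) \<in> {(2, 3, 4, 5), (1, 3, 4, 5), (1, 2, 4, 5), (1, 2, 3, 5), (1, 2, 3, 4)}"
      using that by simp presburger
    then show ?thesis using zero by auto
  qed
qed (rule pf4_polar_swaps[OF X Y] assms | assumption)+

lemma on_pfaff_scheme_pf4_polar:
  assumes alt: "\<forall>k\<in>{1..4}. alternating5 (A k)" and "on_pfaff_scheme A p"
    and "i \<in> {1..5}" "j \<in> {1..5}" "k \<in> {1..5}" "l \<in> {1..5}"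
  shows "pf4_polar (pencil A p) (pencil A p) i j k l = 0"
proof (rule pf4_polar_zero_if_increasing_zero)
  have "subpf A m p = 0" if "m \<in> {1..5}" for m
    using assms(2) that unfolding on_pfaff_scheme_def by blast
  from this[of 1] this[of 2] this[of 3] this[of 4] this[of 5]
  show "pf4_polar (pencil A p) (pencil A p) 2 3 4 5 = 0" "pf4_polar (pencil A p) (pencil A p) 1 3 4 5 = 0"
    "pf4_polar (pencil A p) (pencil A p) 1 2 4 5 = 0" "pf4_polar (pencil A p) (pencil A p) 1 2 3 5 = 0"
    "pf4_polar (pencil A p) (pencil A p) 1 2 3 4 = 0"
    unfolding subpf_eq_pf4 pf4_polar_self by simp_all
qed (use assms alternating5_pencil[OF alt] in auto)

lemma cone_tangent_pf4_polar:
  assumes alt: "\<forall>k\<in>{1..4}. alternating5 (A k)" and "cone_tangent A p v"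
    and "i \<in> {1..5}" "j \<in> {1..5}" "k \<in> {1..5}" "l \<in> {1..5}"
  shows "pf4_polar (pencil A p) (pencil A v) i j k l = 0"
proof (rule pf4_polar_zero_if_increasing_zero)
  have "pf4_polar (pencil A p) (pencil A v) a b c d = 0"
    if "m \<in> {1..5}" "\<And>x. subpf A m x = pf4 (pencil A x) a b c d" for m a b c d
  proof -
    have "((\<lambda>t. subpf A m (\<lambda>k. p k + t * v k)) has_field_derivative
        pf4_polar (pencil A p) (pencil A v) a b c d) (at 0)"
      unfolding that(2) linform_shift by (rule has_field_derivative_pf4)
    moreover have "((\<lambda>t. subpf A m (\<lambda>k. p k + t * v k)) has_field_derivative 0) (at 0)"
      using assms(2) that(1) unfolding cone_tangent_def by blast
    ultimately show ?thesis using DERIV_unique by blast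
  qed
  from this[OF _ subpf_eq_pf4(1)] this[OF _ subpf_eq_pf4(2)] this[OF _ subpf_eq_pf4(3)]
    this[OF _ subpf_eq_pf4(4)] this[OF _ subpf_eq_pf4(5)]
  show "pf4_polar (pencil A p) (pencil A v) 2 3 4 5 = 0" "pf4_polar (pencil A p) (pencil A v) 1 3 4 5 = 0"
    "pf4_polar (pencil A p) (pencil A v) 1 2 4 5 = 0" "pf4_polar (pencil A p) (pencil A v) 1 2 3 5 = 0"
    "pf4_polar (pencil A p) (pencil A v) 1 2 3 4 = 0"
    by simp_all
qed (use assms alternating5_pencil[OF alt] in auto)

section \<open>The congruence action\<close>

definition congr ::
    "nat \<Rightarrow> (nat \<Rightarrow> nat \<Rightarrow> complex) \<Rightarrow> (nat \<Rightarrow> nat \<Rightarrow> complex) \<Rightarrow> nat \<Rightarrow> nat \<Rightarrow> complex" where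
  "congr n g X i j = (\<Sum>a=1..n. \<Sum>b=1..n. g i a * X a b * g j b)"

definition matmul ::
    "nat \<Rightarrow> (nat \<Rightarrow> nat \<Rightarrow> complex) \<Rightarrow> (nat \<Rightarrow> nat \<Rightarrow> complex) \<Rightarrow> nat \<Rightarrow> nat \<Rightarrow> complex" where
  "matmul n h g i j = (\<Sum>c=1..n. h i c * g c j)"

lemma act_eq_congr: "act g4 g5 A k i j = (\<Sum>l=1..4. g4 k l * congr 5 g5 (A l) i j)"
  unfolding act_def congr_def by simp

lemma congr_sum: "congr n g (\<lambda>i j. \<Sum>l\<in>L. c l * X l i j) i j = (\<Sum>l\<in>L. c l * congr n g (X l) i j)"
proof -
  have "congr n g (\<lambda>i j. \<Sum>l\<in>L. c l * X l i j) i j =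
      (\<Sum>a=1..n. \<Sum>b=1..n. \<Sum>l\<in>L. c l * (g i a * X l a b * g j b))"
    unfolding congr_def by (simp add: sum_distrib_left sum_distrib_right algebra_simps)
  also have "\<dots> = (\<Sum>l\<in>L. \<Sum>a=1..n. \<Sum>b=1..n. c l * (g i a * X l a b * g j b))"
    by (simp only: sum.swap[where B = L])
  also have "\<dots> = (\<Sum>l\<in>L. c l * congr n g (X l) i j)"
    unfolding congr_def by (simp add: sum_distrib_left)
  finally show ?thesis .
qed

lemma congr_divide: "congr n g (\<lambda>a b. X a b / c) i j = congr n g X i j / c"
  unfolding congr_def by (simp add: sum_divide_distrib)

lemma congr_matmul: "congr n (matmul n h g) X i j = congr n h (congr n g X) i j"
proof -
  have "congr n (matmul n h g) X i j =
      (\<Sum>a=1..n. \<Sum>b=1..n. \<Sum>c=1..n. \<Sum>d=1..n. h i c * h j d * (g c a * X a b * g d b))"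
    unfolding congr_def matmul_def by (simp add: sum_distrib_left sum_distrib_right algebra_simps)
  also have "\<dots> = (\<Sum>a=1..n. \<Sum>c=1..n. \<Sum>b=1..n. \<Sum>d=1..n. h i c * h j d * (g c a * X a b * g d b))"
    by (intro sum.cong refl sum.swap)
  also have "\<dots> = (\<Sum>c=1..n. \<Sum>a=1..n. \<Sum>b=1..n. \<Sum>d=1..n. h i c * h j d * (g c a * X a b * g d b))"
    by (rule sum.swap)
  also have "\<dots> = (\<Sum>c=1..n. \<Sum>a=1..n. \<Sum>d=1..n. \<Sum>b=1..n. h i c * h j d * (g c a * X a b * g d b))"
    by (intro sum.cong refl sum.swap)
  also have "\<dots> = (\<Sum>c=1..n. \<Sum>d=1..n. \<Sum>a=1..n. \<Sum>b=1..n. h i c * h j d * (g c a * X a b * g d b))"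
    by (intro sum.cong refl sum.swap)
  also have "\<dots> = congr n h (congr n g X) i j"
    unfolding congr_def by (simp add: sum_distrib_left sum_distrib_right algebra_simps)
  finally show ?thesis .
qed

lemma unipotent_lower_matmul:
  assumes h: "unipotent_lower n h" and g: "unipotent_lower n g"
  shows "unipotent_lower n (matmul n h g)"
  unfolding unipotent_lower_def
proof (intro ballI conjI impI)
  fix i j :: nat
  assume i: "i \<in> {1..n}" and j: "j \<in> {1..n}"
  have upper_zero: "h i c * g c j = 0" if "c \<in> {1..n}" "i < c \<or> c < j" for c
    using h g i j that unfolding unipotent_lower_def by auto
  show "matmul n h g i j = 0" if "i < j"
    unfolding matmul_def using upper_zero that by (intro sum.neutral) force
  show "matmul n h g i j = 1" if "i = j"
  proof -
    have "matmul n h g i j = (\<Sum>c=1..n. if c = i then 1 else 0)"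
      unfolding matmul_def
    proof (rule sum.cong[OF refl])
      fix c
      assume c: "c \<in> {1..n}"
      show "h i c * g c j = (if c = i then 1 else 0)"
      proof (cases "c = i")
        case True
        then show ?thesis using h g i \<open>i = j\<close> unfolding unipotent_lower_def by simp
      next
        case False
        then have "i < c \<or> c < j" using \<open>i = j\<close> by linarith
        then show ?thesis using upper_zero[OF c] False by simp
      qed
    qed
    then show ?thesis using i by simp
  qed
qed

lemma alternating5_congr:
  assumes X: "alternating5 X"
  shows "alternating5 (congr 5 g X)"
proof -
  have swap: "congr 5 g X j i = - congr 5 g X i j" for i j
  proof -
    have "congr 5 g X j i = (\<Sum>b=1..5. \<Sum>a=1..5. g j a * X a b * g i b)"
      unfolding congr_def by (rule sum.swap)
    also have "\<dots> = (\<Sum>a=1..5. \<Sum>b=1..5. - (g i a * X a b * g j b))"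
    proof (intro sum.cong refl)
      fix a b :: nat
      assume "a \<in> {1..5}" "b \<in> {1..5}"
      then have "X b a = - X a b" using X unfolding alternating5_def by blast
      then show "g j b * X b a * g i a = - (g i a * X a b * g j b)" by simp
    qed
    also have "\<dots> = - congr 5 g X i j" unfolding congr_def by (simp add: sum_negf)
    finally show ?thesis .
  qed
  moreover have "congr 5 g X i i = 0" for i
    using swap[of i i] by simp
  ultimately show ?thesis unfolding alternating5_def by blast
qed

lemma act_matmul: "act g4 (matmul 5 h g) A k i j = congr 5 h (act g4 g A k) i j"
  unfolding act_eq_congr congr_matmul congr_sum ..

lemma act_eq_congr_pencil: "act g4 g5 A k i j = congr 5 g5 (pencil A (g4 k)) i j"
  unfolding act_eq_congr linform_def by (simp add: congr_sum mult.commute)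

lemma alternating5_act:
  assumes "\<forall>k\<in>{1..4}. alternating5 (A k)"
  shows "alternating5 (act g4 g5 A k)"
proof -
  have "act g4 g5 A k = congr 5 g5 (pencil A (g4 k))"
    by (simp add: fun_eq_iff act_eq_congr_pencil)
  then show ?thesis using alternating5_congr[OF alternating5_pencil[OF assms]] by simp
qed

lemma linform_congr: "linform (\<lambda>k. congr 5 h (B k)) c d x = congr 5 h (pencil B x) c d"
  unfolding linform_def using congr_sum[of 5 h x B "{1..4}"] by (simp add: mult.commute)

lemma linform_act:
  "linform (act g4 g5 A) c d x = (\<Sum>l=1..4. (\<Sum>k=1..4. g4 k l * x k) * congr 5 g5 (A l) c d)"
proof -
  have "linform (act g4 g5 A) c d x = (\<Sum>k=1..4. \<Sum>l=1..4. x k * g4 k l * congr 5 g5 (A l) c d)"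
    unfolding linform_def act_eq_congr by (simp add: sum_distrib_left algebra_simps)
  also have "\<dots> = (\<Sum>l=1..4. (\<Sum>k=1..4. g4 k l * x k) * congr 5 g5 (A l) c d)"
    by (subst sum.swap) (simp add: sum_distrib_left mult_ac)
  finally show ?thesis .
qed

section \<open>Alternating matrices of rank two\<close>

definition dot :: "nat \<Rightarrow> (nat \<Rightarrow> complex) \<Rightarrow> (nat \<Rightarrow> complex) \<Rightarrow> complex" where
  "dot n s t = (\<Sum>j=1..n. s j * t j)"

definition wedge :: "(nat \<Rightarrow> complex) \<Rightarrow> (nat \<Rightarrow> complex) \<Rightarrow> nat \<Rightarrow> nat \<Rightarrow> complex" where
  "wedge u v i j = u i * v j - u j * v i"

lemma congr_eq_dot: "congr n g X i j = dot n (g i) (\<lambda>a. dot n (X a) (g j))"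
  unfolding congr_def dot_def by (simp add: sum_distrib_left mult.assoc)

lemma dot_row_wedge:
  assumes "\<forall>i\<in>{1..n}. \<forall>j\<in>{1..n}. X i j = \<mu> * wedge u v i j" "i \<in> {1..n}"
  shows "dot n (X i) s = \<mu> * (u i * dot n s v - v i * dot n s u)"
proof -
  have row: "X i k = \<mu> * wedge u v i k" if "k \<in> {1..n}" for k
    using assms that by blast
  have "dot n (X i) s = (\<Sum>k=1..n. \<mu> * u i * (s k * v k) - \<mu> * v i * (s k * u k))"
    unfolding dot_def by (intro sum.cong refl) (simp add: row wedge_def algebra_simps)
  also have "\<dots> = \<mu> * (u i * dot n s v - v i * dot n s u)"
    unfolding dot_def by (simp add: sum_subtractf sum_distrib_left algebra_simps)
  finally show ?thesis .
qed

lemma dot_bilinear_wedge: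
  assumes "\<forall>i\<in>{1..n}. \<forall>j\<in>{1..n}. X i j = \<mu> * wedge u v i j"
  shows "dot n s (\<lambda>a. dot n (X a) t) = \<mu> * (dot n s u * dot n t v - dot n s v * dot n t u)"
proof -
  have "dot n s (\<lambda>a. dot n (X a) t) = (\<Sum>a=1..n. \<mu> * (s a * u a) * dot n t v - \<mu> * (s a * v a) * dot n t u)"
    unfolding dot_def[of n s] by (intro sum.cong refl) (simp add: dot_row_wedge[OF assms] algebra_simps)
  also have "\<dots> = \<mu> * (dot n s u * dot n t v - dot n s v * dot n t u)"
    unfolding dot_def[of n s] by (simp add: sum_subtractf sum_distrib_left sum_distrib_right algebra_simps)
  finally show ?thesis .
qed

lemma congr_wedge:
  assumes "\<forall>i\<in>{1..n}. \<forall>j\<in>{1..n}. X i j = \<mu> * wedge u v i j"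
  shows "congr n g X i j = \<mu> * wedge (\<lambda>c. dot n (g c) u) (\<lambda>c. dot n (g c) v) i j"
  unfolding congr_eq_dot dot_bilinear_wedge[OF assms] by (simp add: wedge_def algebra_simps)

lemma pf4_polar_contract:
  "(\<Sum>k=1..n. \<Sum>l=1..n. s k * t l * pf4_polar X Y a b k l) =
     X a b * dot n s (\<lambda>k. dot n (Y k) t) + Y a b * dot n s (\<lambda>k. dot n (X k) t)
     - dot n (X a) s * dot n (Y b) t - dot n (Y a) s * dot n (X b) t
     + dot n (X a) t * dot n (Y b) s + dot n (Y a) t * dot n (X b) s"
proof -
  have term1: "(\<Sum>k=1..n. \<Sum>l=1..n. s k * t l * (X a b * Y k l)) = X a b * dot n s (\<lambda>k. dot n (Y k) t)"
    for X Y :: "nat \<Rightarrow> nat \<Rightarrow> complex" and a b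
    by (simp add: dot_def sum_distrib_left algebra_simps)
  have term2: "(\<Sum>k=1..n. \<Sum>l=1..n. s k * t l * (X a k * Y b l)) = dot n (X a) s * dot n (Y b) t"
    for X Y :: "nat \<Rightarrow> nat \<Rightarrow> complex" and a b
    by (simp add: dot_def sum_product algebra_simps)
  have term3: "(\<Sum>k=1..n. \<Sum>l=1..n. s k * t l * (X a l * Y b k)) = dot n (X a) t * dot n (Y b) s"
    for X Y :: "nat \<Rightarrow> nat \<Rightarrow> complex" and a b
    unfolding dot_def sum_product by (subst sum.swap) (simp add: algebra_simps)
  have "(\<Sum>k=1..n. \<Sum>l=1..n. s k * t l * pf4_polar X Y a b k l) =
      (\<Sum>k=1..n. \<Sum>l=1..n. s k * t l * (X a b * Y k l)) + (\<Sum>k=1..n. \<Sum>l=1..n. s k * t l * (Y a b * X k l))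
      - (\<Sum>k=1..n. \<Sum>l=1..n. s k * t l * (X a k * Y b l)) - (\<Sum>k=1..n. \<Sum>l=1..n. s k * t l * (Y a k * X b l))
      + (\<Sum>k=1..n. \<Sum>l=1..n. s k * t l * (X a l * Y b k)) + (\<Sum>k=1..n. \<Sum>l=1..n. s k * t l * (Y a l * X b k))"
    unfolding pf4_polar_def by (simp add: algebra_simps sum.distrib sum_subtractf)
  then show ?thesis by (simp only: term1 term2 term3)
qed

lemma congr_zero_if_pf4_polar_zero:
  assumes M: "\<forall>i\<in>{1..n}. \<forall>j\<in>{1..n}. M i j = \<mu> * wedge u v i j"
    and ab: "a \<in> {1..n}" "b \<in> {1..n}" "M a b \<noteq> 0"
    and polar: "\<forall>k\<in>{1..n}. \<forall>l\<in>{1..n}. pf4_polar M N a b k l = 0"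
    and orth: "dot n (g c) u = 0" "dot n (g c) v = 0" "dot n (g d) u = 0" "dot n (g d) v = 0"
  shows "congr n g N c d = 0"
proof -
  have "0 = (\<Sum>k=1..n. \<Sum>l=1..n. g c k * g d l * pf4_polar M N a b k l)"
    using polar by simp
  also have "\<dots> = M a b * congr n g N c d"
    unfolding pf4_polar_contract congr_eq_dot dot_bilinear_wedge[OF M]
      dot_row_wedge[OF M ab(1)] dot_row_wedge[OF M ab(2)] orth by simp
  finally show ?thesis using ab(3) by simp
qed

lemma alternating5_leading_entry:
  assumes alt: "alternating5 M" and nonzero: "\<exists>i\<in>{1..5}. \<exists>j\<in>{1..5}. M i j \<noteq> 0"
  shows "\<exists>a b. a \<in> {1..5} \<and> b \<in> {1..5} \<and> a < b \<and> M a b \<noteq> 0 \<and>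
    (\<forall>i\<in>{1..5}. i < a \<longrightarrow> M i b = 0) \<and> (\<forall>j\<in>{1..5}. j < b \<longrightarrow> M a j = 0)"
proof -
  define a where "a = (LEAST i. i \<in> {1..5} \<and> (\<exists>j\<in>{1..5}. M i j \<noteq> 0))"
  have a: "a \<in> {1..5}" "\<exists>j\<in>{1..5}. M a j \<noteq> 0"
    using LeastI_ex[of "\<lambda>i. i \<in> {1..5} \<and> (\<exists>j\<in>{1..5}. M i j \<noteq> 0)"] nonzero
    unfolding a_def[symmetric] by blast+
  have above_a: "M i j = 0" if "i \<in> {1..5}" "j \<in> {1..5}" "i < a" for i j
    using not_less_Least[of i "\<lambda>i. i \<in> {1..5} \<and> (\<exists>j\<in>{1..5}. M i j \<noteq> 0)"] that
    unfolding a_def[symmetric] by blast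
  define b where "b = (LEAST j. j \<in> {1..5} \<and> M a j \<noteq> 0)"
  have b: "b \<in> {1..5}" "M a b \<noteq> 0"
    using LeastI_ex[of "\<lambda>j. j \<in> {1..5} \<and> M a j \<noteq> 0"] a(2) unfolding b_def[symmetric] by blast+
  have left_of_b: "M a j = 0" if "j \<in> {1..5}" "j < b" for j
    using not_less_Least[of j "\<lambda>j. j \<in> {1..5} \<and> M a j \<noteq> 0"] that
    unfolding b_def[symmetric] by blast
  have "a < b"
  proof (rule ccontr)
    assume "\<not> a < b"
    moreover have "M a a = 0" "M b a = - M a b"
      using alt a(1) b(1) unfolding alternating5_def by blast+
    ultimately show False using above_a[OF b(1) a(1)] b(2) by (cases "a = b") auto
  qed
  then show ?thesis using a(1) b above_a left_of_b by blast
qed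

lemma wedge_if_pf4_zero:
  assumes alt: "alternating5 M" and ab: "a \<in> {1..5}" "b \<in> {1..5}" "M a b \<noteq> 0"
    and pf: "\<forall>i\<in>{1..5}. \<forall>j\<in>{1..5}. pf4 M a b i j = 0"
  shows "\<forall>i\<in>{1..5}. \<forall>j\<in>{1..5}. M i j = M a b * wedge (\<lambda>i. M i b / M a b) (\<lambda>j. M a j / M a b) i j"
proof (intro ballI)
  fix i j :: nat
  assume i: "i \<in> {1..5}" and j: "j \<in> {1..5}"
  have "M b i = - M i b" "M b j = - M j b"
    using alt ab i j unfolding alternating5_def by blast+
  moreover have "M a b * M i j - M a i * M b j + M a j * M b i = 0"
    using pf i j unfolding pf4_def by blast
  ultimately have pluecker: "M a b * M i j = M i b * M a j - M j b * M a i"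
    by (simp add: algebra_simps)
  have "M a b * wedge (\<lambda>i. M i b / M a b) (\<lambda>j. M a j / M a b) i j = (M i b * M a j - M j b * M a i) / M a b"
    using ab(3) unfolding wedge_def by (simp add: field_simps power2_eq_square)
  also have "\<dots> = M i j"
    using ab(3) unfolding pluecker[symmetric] by simp
  finally show "M i j = M a b * wedge (\<lambda>i. M i b / M a b) (\<lambda>j. M a j / M a b) i j" ..
qed

lemma exists_unipotent_dual_pair:
  assumes ab: "a \<in> {1..n}" "b \<in> {1..n}" "a < b"
    and u: "u a = 1" "u b = 0" "\<forall>i\<in>{1..n}. i < a \<longrightarrow> u i = 0"
    and v: "v a = 0" "v b = 1" "\<forall>i\<in>{1..n}. i < b \<longrightarrow> v i = 0"
  shows "\<exists>g. unipotent_lower n g \<and> (\<forall>c\<in>{1..n}. dot n (g c) u = of_bool (c = a) \<and> dot n (g c) v = of_bool (c = b))"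
proof -
  have pick: "(\<Sum>j=1..n. (if j = x then y else 0) * w j) = y * w x" if "x \<in> {1..n}" for x and y :: complex and w
  proof -
    have "(\<Sum>j=1..n. (if j = x then y else 0) * w j) = (\<Sum>j=1..n. if j = x then y * w x else 0)"
      by (rule sum.cong) auto
    then show ?thesis using that by (simp add: sum.delta')
  qed
  (* g = I - N for N = (u - e_a) e_a^T + (v - e_b) e_b^T; as N^2 = 0, g inverts the
     unitriangular matrix I + N whose columns a and b are u and v. *)
  define g where "g c j = (if j = c then 1 else 0) - (if j = a then u c - of_bool (c = a) else 0)
    - (if j = b then v c - of_bool (c = b) else 0)" for c j
  have "dot n (g c) w = w c - (u c - of_bool (c = a)) * w a - (v c - of_bool (c = b)) * w b"
    if "c \<in> {1..n}" for c w
    unfolding dot_def g_def by (simp only: left_diff_distrib sum_subtractf pick that ab) simp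
  then have "dot n (g c) u = of_bool (c = a) \<and> dot n (g c) v = of_bool (c = b)" if "c \<in> {1..n}" for c
    using that u(1,2) v(1,2) ab(3) by auto
  moreover have "unipotent_lower n g"
    using u v ab(3) unfolding unipotent_lower_def g_def by auto
  ultimately show ?thesis by blast
qed

lemma rank_two_normal_form:
  assumes alt: "alternating5 M"
    and rank: "\<forall>i\<in>{1..5}. \<forall>j\<in>{1..5}. \<forall>k\<in>{1..5}. \<forall>l\<in>{1..5}. pf4 M i j k l = 0"
    and nonzero: "\<exists>i\<in>{1..5}. \<exists>j\<in>{1..5}. M i j \<noteq> 0"
  shows "\<exists>a b g. a \<in> {1..5} \<and> b \<in> {1..5} \<and> a < b \<and> unipotent_lower 5 g \<and>
    (\<forall>i\<in>{1..5}. \<forall>j\<in>{1..5}.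
      congr 5 g M i j = M a b * wedge (\<lambda>i. of_bool (i = a)) (\<lambda>j. of_bool (j = b)) i j) \<and>
    (\<forall>N c d. c \<in> {1..5} - {a, b} \<longrightarrow> d \<in> {1..5} - {a, b} \<longrightarrow>
      (\<forall>k\<in>{1..5}. \<forall>l\<in>{1..5}. pf4_polar M N a b k l = 0) \<longrightarrow> congr 5 g N c d = 0)"
proof -
  obtain a b where ab: "a \<in> {1..5}" "b \<in> {1..5}" "a < b" "M a b \<noteq> 0"
    and above: "\<forall>i\<in>{1..5}. i < a \<longrightarrow> M i b = 0" and left: "\<forall>j\<in>{1..5}. j < b \<longrightarrow> M a j = 0"
    using alternating5_leading_entry[OF alt nonzero] by blast
  define u where "u i = M i b / M a b" for i
  define v where "v j = M a j / M a b" for j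
  have M: "\<forall>i\<in>{1..5}. \<forall>j\<in>{1..5}. M i j = M a b * wedge u v i j"
    unfolding u_def v_def using wedge_if_pf4_zero[OF alt ab(1,2,4)] rank ab(1,2) by blast
  have "M a a = 0" "M b b = 0"
    using alt ab(1,2) unfolding alternating5_def by blast+
  then obtain g where g: "unipotent_lower 5 g"
    and dual: "\<forall>c\<in>{1..5}. dot 5 (g c) u = of_bool (c = a) \<and> dot 5 (g c) v = of_bool (c = b)"
    using exists_unipotent_dual_pair[OF ab(1-3), of u v] ab(4) above left
    unfolding u_def v_def by auto
  have "congr 5 g M i j = M a b * wedge (\<lambda>i. of_bool (i = a)) (\<lambda>j. of_bool (j = b)) i j"
    if "i \<in> {1..5}" "j \<in> {1..5}" for i j
    unfolding congr_wedge[OF M] using dual that by (simp add: wedge_def)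
  moreover have "congr 5 g N c d = 0"
    if "c \<in> {1..5} - {a, b}" "d \<in> {1..5} - {a, b}" "\<forall>k\<in>{1..5}. \<forall>l\<in>{1..5}. pf4_polar M N a b k l = 0"
    for N c d
    using congr_zero_if_pf4_polar_zero[OF M ab(1,2,4) that(3)] dual that(1,2) by auto
  ultimately show ?thesis using ab g by blast
qed

section \<open>Linear forms vanishing on a plane\<close>

lemma exists_nonzero_kernel_2x3:
  fixes x y z x' y' z' :: "'a::field"
  shows "\<exists>c1 c2 c3. (c1 \<noteq> 0 \<or> c2 \<noteq> 0 \<or> c3 \<noteq> 0) \<and>
    c1 * x + c2 * y + c3 * z = 0 \<and> c1 * x' + c2 * y' + c3 * z' = 0"
proof (cases "y * z' - z * y' \<noteq> 0 \<or> z * x' - x * z' \<noteq> 0 \<or> x * y' - y * x' \<noteq> 0")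
  case True
  show ?thesis
    by (rule exI[of _ "y * z' - z * y'"], rule exI[of _ "z * x' - x * z'"], rule exI[of _ "x * y' - y * x'"])
      (use True in \<open>simp add: algebra_simps\<close>)
next
  case False
  then have minor: "x * y' = y * x'" by simp
  consider "x \<noteq> 0" | "x = 0" "x' \<noteq> 0" | "x = 0" "x' = 0" by blast
  then show ?thesis
  proof cases
    case 1
    show ?thesis
      by (rule exI[of _ y], rule exI[of _ "- x"], rule exI[of _ 0]) (use 1 minor in \<open>simp add: algebra_simps\<close>)
  next
    case 2
    show ?thesis
      by (rule exI[of _ y'], rule exI[of _ "- x'"], rule exI[of _ 0]) (use 2 minor in \<open>simp add: algebra_simps\<close>)
  next
    case 3
    show ?thesis by (rule exI[of _ 1], rule exI[of _ 0], rule exI[of _ 0]) (use 3 in simp)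
  qed
qed

lemma cramer_2x2_zero:
  fixes a b v1 v2 w1 w2 :: "'a::idom"
  assumes "v1 * w2 - v2 * w1 \<noteq> 0" "a * v1 + b * v2 = 0" "a * w1 + b * w2 = 0"
  shows "a = 0" "b = 0"
proof -
  have "a * (v1 * w2 - v2 * w1) = w2 * (a * v1 + b * v2) - v2 * (a * w1 + b * w2)"
    "b * (v1 * w2 - v2 * w1) = v1 * (a * w1 + b * w2) - w1 * (a * v1 + b * v2)"
    by (simp_all add: algebra_simps)
  then show "a = 0" "b = 0" using assms by simp_all
qed

lemma exists_nonzero_minor:
  assumes indep: "\<forall>a b. (\<forall>k\<in>{1..4}. a * v k + b * w k = 0) \<longrightarrow> a = 0 \<and> b = 0"
  shows "\<exists>i\<in>{1..4}. \<exists>j\<in>{1..4}. v i * w j - v j * w i \<noteq> (0::complex)"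
proof (rule ccontr)
  assume "\<not> ?thesis"
  then have minors: "w k * v q + (- v k) * w q = 0" if "k \<in> {1..4}" "q \<in> {1..4}" for k q
    using that by (auto simp: algebra_simps)
  show False
  proof (cases "\<exists>k\<in>{1..4}. v k \<noteq> 0")
    case True
    then obtain k where "k \<in> {1..4}" "v k \<noteq> 0" by blast
    then show False using indep[rule_format, of "w k" "- v k"] minors[of k] by simp
  next
    case False
    then show False using indep[rule_format, of 1 0] by simp
  qed
qed

lemma exists_two_outside_pair:
  assumes "i \<in> {1..4}" "j \<in> {1..4}" "i \<noteq> (j::nat)"
  shows "\<exists>k l. {1..4} = {i, j, k, l} \<and> distinct [i, j, k, l]"
proof -
  have "card ({1..4} - {i, j}) = 2"
    using assms by (simp add: card_Diff_subset)
  then obtain k l where "{1..4} - {i, j} = {k, l}" "k \<noteq> l"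
    by (auto simp: card_2_iff)
  then have "{1..4} = {i, j, k, l}" "k \<notin> {i, j}" "l \<notin> {i, j}"
    using assms by blast+
  then show ?thesis using assms(3) \<open>k \<noteq> l\<close> by auto
qed

lemma three_annihilators_dependent:
  assumes annihilate: "dot 4 f1 v = 0" "dot 4 f2 v = 0" "dot 4 f3 v = 0"
      "dot 4 f1 w = 0" "dot 4 f2 w = 0" "dot 4 f3 w = 0"
    and indep: "\<forall>a b. (\<forall>k\<in>{1..4}. a * v k + b * w k = 0) \<longrightarrow> a = 0 \<and> b = 0"
  shows "\<exists>c1 c2 c3. (c1 \<noteq> 0 \<or> c2 \<noteq> 0 \<or> c3 \<noteq> 0) \<and> (\<forall>q\<in>{1..4}. c1 * f1 q + c2 * f2 q + c3 * f3 q = 0)"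
proof -
  (* Kill the combination at the two coordinates outside a nonzero 2x2 minor of (v, w);
     Cramer's rule then kills it at the coordinates of the minor. *)
  obtain i j where ij: "i \<in> {1..4}" "j \<in> {1..4}" and minor: "v i * w j - v j * w i \<noteq> 0"
    using exists_nonzero_minor[OF indep] by blast
  moreover have "i \<noteq> j" using minor by auto
  ultimately obtain k l where four: "{1..4} = {i, j, k, l}" "distinct [i, j, k, l]"
    using exists_two_outside_pair by blast
  obtain c1 c2 c3 where c: "c1 \<noteq> 0 \<or> c2 \<noteq> 0 \<or> c3 \<noteq> 0"
    and kl: "c1 * f1 k + c2 * f2 k + c3 * f3 k = 0" "c1 * f1 l + c2 * f2 l + c3 * f3 l = 0"
    using exists_nonzero_kernel_2x3 by blast
  define F where "F q = c1 * f1 q + c2 * f2 q + c3 * f3 q" for q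
  have "dot 4 F u = c1 * dot 4 f1 u + c2 * dot 4 f2 u + c3 * dot 4 f3 u" for u
    unfolding F_def dot_def by (simp add: sum.distrib sum_distrib_left algebra_simps)
  moreover have "dot 4 F u = F i * u i + F j * u j" for u
    unfolding dot_def four(1) using four(2) kl by (simp add: F_def)
  ultimately have "F i * v i + F j * v j = 0" "F i * w i + F j * w j = 0"
    using annihilate by (metis mult_zero_right add.right_neutral)+
  then have "F i = 0" "F j = 0"
    using cramer_2x2_zero[OF minor] by blast+
  then show ?thesis
    using c kl four(1) unfolding F_def by auto
qed

section \<open>Reduced triples of linear forms\<close>

definition lin_indep2 :: "('x \<Rightarrow> complex) \<Rightarrow> ('x \<Rightarrow> complex) \<Rightarrow> bool" where
  "lin_indep2 f g \<longleftrightarrow> (\<forall>a b. (\<forall>x. a * f x + b * g x = 0) \<longrightarrow> a = 0 \<and> b = 0)"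

definition reduced_triple :: "('x \<Rightarrow> complex) \<Rightarrow> ('x \<Rightarrow> complex) \<Rightarrow> ('x \<Rightarrow> complex) \<Rightarrow> bool" where
  "reduced_triple f1 f2 f3 \<longleftrightarrow>
     (f1 = (\<lambda>_. 0) \<and> f2 = (\<lambda>_. 0)) \<or> (f1 = (\<lambda>_. 0) \<and> f3 = (\<lambda>_. 0)) \<or> (f2 = (\<lambda>_. 0) \<and> f3 = (\<lambda>_. 0)) \<or>
     (f1 = (\<lambda>_. 0) \<and> lin_indep2 f2 f3) \<or> (f2 = (\<lambda>_. 0) \<and> lin_indep2 f1 f3) \<or>
     (f3 = (\<lambda>_. 0) \<and> lin_indep2 f1 f2)"

lemma lin_indep2_commute: "lin_indep2 f g \<longleftrightarrow> lin_indep2 g f"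
proof -
  have "lin_indep2 g f" if "lin_indep2 f g" for f g :: "'x \<Rightarrow> complex"
    unfolding lin_indep2_def
  proof (intro allI impI)
    fix a b
    assume "\<forall>x. a * g x + b * f x = 0"
    then have "\<forall>x. b * f x + a * g x = 0" by (simp add: add.commute)
    then show "a = 0 \<and> b = 0" using that unfolding lin_indep2_def by blast
  qed
  then show ?thesis by blast
qed

lemma lin_indep2_uminus_left: "lin_indep2 (\<lambda>x. - f x) g \<longleftrightarrow> lin_indep2 f g"
proof -
  have neg: "lin_indep2 (\<lambda>x. - f x) g" if "lin_indep2 f g" for f
    unfolding lin_indep2_def
  proof (intro allI impI)
    fix a b
    assume "\<forall>x. a * - f x + b * g x = 0"
    then have "\<forall>x. (- a) * f x + b * g x = 0" by simp
    then have "- a = 0 \<and> b = 0" using that unfolding lin_indep2_def by blast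
    then show "a = 0 \<and> b = 0" by simp
  qed
  show ?thesis using neg[of f] neg[of "\<lambda>x. - f x"] by (simp only: minus_minus) blast
qed

lemma lin_indep2_uminus_right: "lin_indep2 f (\<lambda>x. - g x) \<longleftrightarrow> lin_indep2 f g"
  by (simp only: lin_indep2_commute[of f] lin_indep2_uminus_left)

lemma lin_indep2_if_not_multiple:
  assumes "g \<noteq> (\<lambda>_. 0)" "\<nexists>c. \<forall>x. f x = c * g x"
  shows "lin_indep2 f g"
  unfolding lin_indep2_def
proof (intro allI impI)
  fix a b
  assume comb: "\<forall>x. a * f x + b * g x = 0"
  have "a = 0"
  proof (rule ccontr)
    assume "a \<noteq> 0"
    have "f x = (- b / a) * g x" for x
      using comb[rule_format, of x] \<open>a \<noteq> 0\<close> by (simp add: field_simps eq_neg_iff_add_eq_0)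
    then show False using assms(2) by blast
  qed
  moreover obtain x where "g x \<noteq> 0" using assms(1) by auto
  moreover have "a * f x + b * g x = 0" using comb by blast
  ultimately show "a = 0 \<and> b = 0" by simp
qed

lemma exists_reduced_triple:
  assumes nontrivial: "\<alpha> \<noteq> 0 \<or> \<beta> \<noteq> 0 \<or> \<gamma> \<noteq> 0"
    and dep: "\<forall>x. \<alpha> * f1 x + \<beta> * f2 x + \<gamma> * f3 x = 0"
  shows "\<exists>s r z. reduced_triple (\<lambda>x. f1 x + s * f2 x + r * f3 x) (\<lambda>x. f2 x + z * f3 x) f3"
proof (cases "f3 = (\<lambda>_. 0)")
  case True
  consider "f2 = (\<lambda>_. 0)" | c where "\<forall>x. f1 x = c * f2 x" | "lin_indep2 f1 f2"
    using lin_indep2_if_not_multiple by blast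
  then show ?thesis
  proof cases
    case 1
    then show ?thesis using True by (intro exI[of _ 0]) (simp add: reduced_triple_def)
  next
    case (2 c)
    show ?thesis
      by (rule exI[of _ "- c"], rule exI[of _ 0], rule exI[of _ 0]) (use 2 True in \<open>simp add: reduced_triple_def\<close>)
  next
    case 3
    then show ?thesis using True by (intro exI[of _ 0]) (simp add: reduced_triple_def)
  qed
next
  case f3: False
  show ?thesis
  proof (cases "\<exists>\<kappa>. \<forall>x. f2 x = \<kappa> * f3 x")
    case True
    then obtain \<kappa> where \<kappa>: "\<forall>x. f2 x = \<kappa> * f3 x" by blast
    consider d where "\<forall>x. f1 x = d * f3 x" | "lin_indep2 f1 f3"
      using lin_indep2_if_not_multiple[OF f3] by blast
    then show ?thesis
    proof cases
      case (1 d)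
      show ?thesis
        by (rule exI[of _ 0], rule exI[of _ "- d"], rule exI[of _ "- \<kappa>"])
          (use 1 \<kappa> in \<open>simp add: reduced_triple_def\<close>)
    next
      case 2
      show ?thesis
        by (rule exI[of _ 0], rule exI[of _ 0], rule exI[of _ "- \<kappa>"])
          (use 2 \<kappa> in \<open>simp add: reduced_triple_def\<close>)
    qed
  next
    case False
    then have indep: "lin_indep2 f2 f3" using lin_indep2_if_not_multiple[OF f3] by blast
    have "\<alpha> \<noteq> 0"
    proof
      assume "\<alpha> = 0"
      then have "\<forall>x. \<beta> * f2 x + \<gamma> * f3 x = 0" using dep by simp
      then have "\<beta> = 0 \<and> \<gamma> = 0" using indep unfolding lin_indep2_def by blast
      then show False using nontrivial \<open>\<alpha> = 0\<close> by simp
    qed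
    have first_zero: "f1 x + \<beta> / \<alpha> * f2 x + \<gamma> / \<alpha> * f3 x = 0" for x
      using dep[rule_format, of x] \<open>\<alpha> \<noteq> 0\<close> by (simp add: field_simps)
    show ?thesis
      by (rule exI[of _ "\<beta> / \<alpha>"], rule exI[of _ "\<gamma> / \<alpha>"], rule exI[of _ 0])
        (use first_zero indep in \<open>simp add: reduced_triple_def\<close>)
  qed
qed

section \<open>Unitriangular changes of three coordinates\<close>

definition unitriangular3 :: "nat \<Rightarrow> nat \<Rightarrow> nat \<Rightarrow> complex \<Rightarrow> complex \<Rightarrow> complex \<Rightarrow> nat \<Rightarrow> nat \<Rightarrow> complex" where
  "unitriangular3 c1 c2 c3 x y z i j = of_bool (i = j) + (if i = c2 \<and> j = c1 then x else 0)
     + (if i = c3 \<and> j = c1 then y else 0) + (if i = c3 \<and> j = c2 then z else 0)"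

definition sparse3 :: "nat \<Rightarrow> nat \<Rightarrow> nat \<Rightarrow> complex \<Rightarrow> complex \<Rightarrow> complex \<Rightarrow> nat \<Rightarrow> complex" where
  "sparse3 c1 c2 c3 a1 a2 a3 j = (if j = c1 then a1 else 0) + (if j = c2 then a2 else 0) + (if j = c3 then a3 else 0)"

lemma unipotent_lower_unitriangular3:
  assumes "c1 < c2" "c2 < c3"
  shows "unipotent_lower n (unitriangular3 c1 c2 c3 x y z)"
  using assms unfolding unipotent_lower_def unitriangular3_def by auto

lemma unitriangular3_rows:
  assumes "c1 < c2" "c2 < c3"
  shows "unitriangular3 c1 c2 c3 x y z c1 = sparse3 c1 c2 c3 1 0 0"
    "unitriangular3 c1 c2 c3 x y z c2 = sparse3 c1 c2 c3 x 1 0"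
    "unitriangular3 c1 c2 c3 x y z c3 = sparse3 c1 c2 c3 y z 1"
  using assms unfolding unitriangular3_def sparse3_def by (auto simp: fun_eq_iff)

lemma dot_sparse3:
  assumes "c1 \<in> {1..n}" "c2 \<in> {1..n}" "c3 \<in> {1..n}"
  shows "dot n w (sparse3 c1 c2 c3 a1 a2 a3) = w c1 * a1 + w c2 * a2 + w c3 * a3"
    "dot n (sparse3 c1 c2 c3 a1 a2 a3) w = a1 * w c1 + a2 * w c2 + a3 * w c3"
proof -
  have pick: "(\<Sum>j=1..n. w j * (if j = c then a else 0)) = w c * a" if "c \<in> {1..n}" for c a
    using that by (simp add: if_distrib[of "\<lambda>t. w _ * t"] sum.delta' cong: if_cong)
  show "dot n w (sparse3 c1 c2 c3 a1 a2 a3) = w c1 * a1 + w c2 * a2 + w c3 * a3"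
    unfolding dot_def sparse3_def by (simp only: distrib_left sum.distrib pick assms)
  then show "dot n (sparse3 c1 c2 c3 a1 a2 a3) w = a1 * w c1 + a2 * w c2 + a3 * w c3"
    by (simp add: dot_def mult.commute)
qed

lemma congr_unitriangular3:
  assumes o: "c1 < c2" "c2 < c3" and c: "c1 \<in> {1..5}" "c2 \<in> {1..5}" "c3 \<in> {1..5}"
    and Y: "alternating5 Y"
  shows "congr 5 (unitriangular3 c1 c2 c3 x y z) Y c1 c2 = Y c1 c2"
    "congr 5 (unitriangular3 c1 c2 c3 x y z) Y c1 c3 = Y c1 c3 + z * Y c1 c2"
    "congr 5 (unitriangular3 c1 c2 c3 x y z) Y c2 c3 = Y c2 c3 + x * Y c1 c3 + (x * z - y) * Y c1 c2"
proof -
  have "Y c1 c1 = 0" "Y c2 c2 = 0" "Y c3 c3 = 0" "Y c2 c1 = - Y c1 c2" "Y c3 c1 = - Y c1 c3" "Y c3 c2 = - Y c2 c3"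
    using Y c unfolding alternating5_def by blast+
  then show "congr 5 (unitriangular3 c1 c2 c3 x y z) Y c1 c2 = Y c1 c2"
    "congr 5 (unitriangular3 c1 c2 c3 x y z) Y c1 c3 = Y c1 c3 + z * Y c1 c2"
    "congr 5 (unitriangular3 c1 c2 c3 x y z) Y c2 c3 = Y c2 c3 + x * Y c1 c3 + (x * z - y) * Y c1 c2"
    unfolding congr_eq_dot unitriangular3_rows[OF o] dot_sparse3[OF c] by (simp_all add: algebra_simps)
qed

lemma congr_unitriangular3_column_zero:
  assumes o: "c1 < c2" "c2 < c3" and c: "c1 \<in> {1..n}" "c2 \<in> {1..n}" "c3 \<in> {1..n}"
    and X: "\<forall>k\<in>{1..n}. X k c1 = 0 \<and> X k c2 = 0 \<and> X k c3 = 0"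
    and d: "d \<in> {c1, c2, c3}"
  shows "congr n (unitriangular3 c1 c2 c3 x y z) X i d = 0"
proof -
  obtain b1 b2 b3 where "unitriangular3 c1 c2 c3 x y z d = sparse3 c1 c2 c3 b1 b2 b3"
    using unitriangular3_rows[OF o] d by blast
  then have "congr n (unitriangular3 c1 c2 c3 x y z) X i d =
      dot n (unitriangular3 c1 c2 c3 x y z i) (\<lambda>a. X a c1 * b1 + X a c2 * b2 + X a c3 * b3)"
    unfolding congr_eq_dot by (simp add: dot_sparse3(1)[OF c])
  also have "\<dots> = 0"
    unfolding dot_def using X by (intro sum.neutral) auto
  finally show ?thesis .
qed

definition reduced_at :: "(nat \<Rightarrow> nat \<Rightarrow> 'x \<Rightarrow> complex) \<Rightarrow> nat \<Rightarrow> nat \<Rightarrow> nat \<Rightarrow> bool" where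
  "reduced_at F I J L \<longleftrightarrow>
     (\<forall>x. F I L x = 0) \<and> (\<forall>x. F J L x = 0) \<or> (\<forall>x. F I J x = 0) \<and> lin_indep2 (F I L) (F J L)"

lemma reduced_at_if_reduced_triple:
  fixes F :: "nat \<Rightarrow> nat \<Rightarrow> 'x \<Rightarrow> complex"
  assumes distinct: "c1 \<noteq> c2" "c1 \<noteq> c3" "c2 \<noteq> c3"
    and antisym: "\<And>i j. i \<in> {c1, c2, c3} \<Longrightarrow> j \<in> {c1, c2, c3} \<Longrightarrow> F j i = (\<lambda>x. - F i j x)"
    and reduced: "reduced_triple (F c2 c3) (F c1 c3) (F c1 c2)"
  shows "\<exists>I J L. {I, J, L} = {c1, c2, c3} \<and> I \<noteq> J \<and> I \<noteq> L \<and> J \<noteq> L \<and> reduced_at F I J L"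
proof -
  have swap: "F c2 c1 = (\<lambda>x. - F c1 c2 x)" "F c3 c1 = (\<lambda>x. - F c1 c3 x)" "F c3 c2 = (\<lambda>x. - F c2 c3 x)"
    by (intro antisym; simp)+
  note simps = reduced_at_def swap lin_indep2_uminus_left lin_indep2_uminus_right
  have perms: "{c1, c3, c2} = {c1, c2, c3}" "{c2, c3, c1} = {c1, c2, c3}" by auto
  from reduced show ?thesis
    unfolding reduced_triple_def
  proof (elim disjE conjE)
    assume "F c2 c3 = (\<lambda>_. 0)" "F c1 c3 = (\<lambda>_. 0)"
    then have "reduced_at F c1 c2 c3" by (simp add: simps)
    then show ?thesis using distinct by blast
  next
    assume "F c2 c3 = (\<lambda>_. 0)" "F c1 c2 = (\<lambda>_. 0)"
    then have "reduced_at F c1 c3 c2" by (simp add: simps)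
    then show ?thesis using distinct perms by blast
  next
    assume "F c1 c3 = (\<lambda>_. 0)" "F c1 c2 = (\<lambda>_. 0)"
    then have "reduced_at F c2 c3 c1" by (simp add: simps)
    then show ?thesis using distinct perms by blast
  next
    assume "F c2 c3 = (\<lambda>_. 0)" "lin_indep2 (F c1 c3) (F c1 c2)"
    then have "reduced_at F c2 c3 c1" by (simp add: simps lin_indep2_commute)
    then show ?thesis using distinct perms by blast
  next
    assume "F c1 c3 = (\<lambda>_. 0)" "lin_indep2 (F c2 c3) (F c1 c2)"
    then have "reduced_at F c1 c3 c2" by (simp add: simps lin_indep2_commute)
    then show ?thesis using distinct perms by blast
  next
    assume "F c1 c2 = (\<lambda>_. 0)" "lin_indep2 (F c2 c3) (F c1 c3)"
    then have "reduced_at F c1 c2 c3" by (simp add: simps lin_indep2_commute)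
    then show ?thesis using distinct by blast
  qed
qed

section \<open>Reduction of the pencil\<close>

lemma exists_three_outside_pair:
  assumes "a \<in> {1..5}" "b \<in> {1..5}" "a < (b::nat)"
  shows "\<exists>c1 c2 c3. c1 < c2 \<and> c2 < c3 \<and> c1 \<in> {1..5} - {a, b} \<and> c2 \<in> {1..5} - {a, b} \<and> c3 \<in> {1..5} - {a, b}"
proof -
  have "(a, b) \<in> {(1, 2), (1, 3), (1, 4), (1, 5), (2, 3), (2, 4), (2, 5), (3, 4), (3, 5), (4, 5)}"
    using assms by simp presburger
  then consider "a = 1" "b = 2" | "a = 1" "b = 3" | "a = 1" "b = 4" | "a = 1" "b = 5" | "a = 2" "b = 3"
    | "a = 2" "b = 4" | "a = 2" "b = 5" | "a = 3" "b = 4" | "a = 3" "b = 5" | "a = 4" "b = 5"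
    by auto
  then show ?thesis
    by cases (rule exI[of _ 1] exI[of _ 2] exI[of _ 3] exI[of _ 4] exI[of _ 5], simp)+
qed

lemma exists_unipotent_row_proportional:
  assumes "\<exists>k\<in>{1..n}. p k \<noteq> 0"
  shows "\<exists>K g. K \<in> {1..n} \<and> p K \<noteq> 0 \<and> unipotent_lower n g \<and> (\<forall>l\<in>{1..n}. g K l = p l / p K)"
proof -
  define K where "K = Max {k\<in>{1..n}. p k \<noteq> 0}"
  have "K \<in> {k\<in>{1..n}. p k \<noteq> 0}"
    unfolding K_def using assms by (intro Max_in) auto
  then have K: "K \<in> {1..n}" "p K \<noteq> 0" by auto
  have after_K: "p l = 0" if "l \<in> {1..n}" "K < l" for l
    using Max_ge[of "{k\<in>{1..n}. p k \<noteq> 0}" l] that unfolding K_def by fastforce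
  define g where "g k l = (if k = K then p l / p K else of_bool (k = l))" for k l
  have "unipotent_lower n g"
    unfolding unipotent_lower_def g_def using K(2) after_K by auto
  moreover have "\<forall>l\<in>{1..n}. g K l = p l / p K" unfolding g_def by simp
  ultimately show ?thesis using K by blast
qed

lemma act_row_proportional:
  assumes "\<forall>l\<in>{1..4}. g4 K l = p l / c"
  shows "act g4 g5 A K i j = congr 5 g5 (pencil A p) i j / c"
proof -
  have "pencil A (g4 K) = (\<lambda>a b. linform A a b p / c)"
    using assms by (simp add: fun_eq_iff linform_def sum_divide_distrib)
  then show ?thesis by (simp add: act_eq_congr_pencil congr_divide)
qed

lemma tangent_forms_dependent:
  assumes alt: "\<forall>k\<in>{1..4}. alternating5 (A k)" and tan: "tangent_pos_dim A p"
    and ab: "a \<in> {1..5}" "b \<in> {1..5}"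
    and g0: "\<forall>N c d. c \<in> {1..5} - {a, b} \<longrightarrow> d \<in> {1..5} - {a, b} \<longrightarrow>
      (\<forall>k\<in>{1..5}. \<forall>l\<in>{1..5}. pf4_polar (pencil A p) N a b k l = 0) \<longrightarrow> congr 5 g0 N c d = 0"
    and c: "c1 \<in> {1..5} - {a, b}" "c2 \<in> {1..5} - {a, b}" "c3 \<in> {1..5} - {a, b}"
  shows "\<exists>\<alpha> \<beta> \<gamma>. (\<alpha> \<noteq> 0 \<or> \<beta> \<noteq> 0 \<or> \<gamma> \<noteq> 0) \<and>
    (\<forall>x. \<alpha> * linform (act g4 g0 A) c2 c3 x + \<beta> * linform (act g4 g0 A) c1 c3 x
      + \<gamma> * linform (act g4 g0 A) c1 c2 x = 0)"
proof -
  define G where "G c d l = congr 5 g0 (A l) c d" for c d l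
  have annihilate: "dot 4 (G c d) v = 0"
    if "cone_tangent A p v" "c \<in> {1..5} - {a, b}" "d \<in> {1..5} - {a, b}" for v c d
  proof -
    have "dot 4 (G c d) v = congr 5 g0 (\<lambda>i j. \<Sum>l=1..4. v l * A l i j) c d"
      unfolding G_def dot_def congr_sum by (simp add: mult.commute)
    also have "\<dots> = congr 5 g0 (pencil A v) c d"
      by (simp add: linform_def mult.commute)
    also have "\<dots> = 0"
      using g0 cone_tangent_pf4_polar[OF alt that(1)] ab that(2,3) by blast
    finally show ?thesis .
  qed
  obtain v w where "cone_tangent A p v" "cone_tangent A p w"
    and indep: "\<forall>a b. (\<forall>k\<in>{1..4}. a * v k + b * w k = 0) \<longrightarrow> a = 0 \<and> b = 0"
    using tan unfolding tangent_pos_dim_def by blast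
  then obtain \<alpha> \<beta> \<gamma> where nontrivial: "\<alpha> \<noteq> 0 \<or> \<beta> \<noteq> 0 \<or> \<gamma> \<noteq> 0"
    and dep: "\<forall>l\<in>{1..4}. \<alpha> * G c2 c3 l + \<beta> * G c1 c3 l + \<gamma> * G c1 c2 l = 0"
    using three_annihilators_dependent[of "G c2 c3" v "G c1 c3" "G c1 c2" w] annihilate c by blast
  have "\<alpha> * linform (act g4 g0 A) c2 c3 x + \<beta> * linform (act g4 g0 A) c1 c3 x
      + \<gamma> * linform (act g4 g0 A) c1 c2 x =
    (\<Sum>l=1..4. (\<Sum>k=1..4. g4 k l * x k) * (\<alpha> * G c2 c3 l + \<beta> * G c1 c3 l + \<gamma> * G c1 c2 l))" for x
    unfolding linform_act G_def by (simp add: sum_distrib_left sum.distrib algebra_simps)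
  then show ?thesis using nontrivial dep by auto
qed

lemma exists_unitriangular3_reduced:
  assumes o: "c1 < c2" "c2 < c3" and c: "c1 \<in> {1..5}" "c2 \<in> {1..5}" "c3 \<in> {1..5}"
    and alt: "\<forall>k\<in>{1..4}. alternating5 (B k)"
    and nontrivial: "\<alpha> \<noteq> 0 \<or> \<beta> \<noteq> 0 \<or> \<gamma> \<noteq> 0"
    and dep: "\<forall>x. \<alpha> * linform B c2 c3 x + \<beta> * linform B c1 c3 x + \<gamma> * linform B c1 c2 x = 0"
  shows "\<exists>x y z. reduced_triple (linform (\<lambda>k. congr 5 (unitriangular3 c1 c2 c3 x y z) (B k)) c2 c3)
    (linform (\<lambda>k. congr 5 (unitriangular3 c1 c2 c3 x y z) (B k)) c1 c3)
    (linform (\<lambda>k. congr 5 (unitriangular3 c1 c2 c3 x y z) (B k)) c1 c2)"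
proof -
  obtain s r z where reduced: "reduced_triple
      (\<lambda>x. linform B c2 c3 x + s * linform B c1 c3 x + r * linform B c1 c2 x)
      (\<lambda>x. linform B c1 c3 x + z * linform B c1 c2 x) (linform B c1 c2)"
    using exists_reduced_triple[OF nontrivial dep] by blast
  (* The entry s z - r turns the (c2, c3) form into B23 + s B13 + r B12. *)
  define B' where "B' k = congr 5 (unitriangular3 c1 c2 c3 s (s * z - r) z) (B k)" for k
  note forms = congr_unitriangular3[OF o c alternating5_pencil[OF alt], of s "s * z - r" z]
  have "linform B' c2 c3 = (\<lambda>x. linform B c2 c3 x + s * linform B c1 c3 x + r * linform B c1 c2 x)"
    "linform B' c1 c3 = (\<lambda>x. linform B c1 c3 x + z * linform B c1 c2 x)"
    "linform B' c1 c2 = linform B c1 c2"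
    unfolding B'_def by (simp_all add: fun_eq_iff linform_congr forms)
  then have "reduced_triple (linform B' c2 c3) (linform B' c1 c3) (linform B' c1 c2)"
    using reduced by simp
  then show ?thesis unfolding B'_def by blast
qed

lemma exists_reduced_at_act:
  assumes alt: "\<forall>k\<in>{1..4}. alternating5 (A k)"
    and c: "c1 \<in> {1..5}" "c2 \<in> {1..5}" "c3 \<in> {1..5}"
    and distinct: "c1 \<noteq> c2" "c1 \<noteq> c3" "c2 \<noteq> c3"
    and reduced: "reduced_triple (linform (act g4 g5 A) c2 c3) (linform (act g4 g5 A) c1 c3)
      (linform (act g4 g5 A) c1 c2)"
  shows "\<exists>I J L. {I, J, L} = {c1, c2, c3} \<and> I \<noteq> J \<and> I \<noteq> L \<and> J \<noteq> L \<and>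
    reduced_at (linform (act g4 g5 A)) I J L"
proof -
  have "alternating5 (pencil (act g4 g5 A) x)" for x
    using alternating5_act[OF alt] by (intro alternating5_pencil) blast
  then have "linform (act g4 g5 A) j i x = - linform (act g4 g5 A) i j x"
    if "i \<in> {1..5}" "j \<in> {1..5}" for i j x
    using that unfolding alternating5_def by blast
  then have antisym: "linform (act g4 g5 A) j i = (\<lambda>x. - linform (act g4 g5 A) i j x)"
    if "i \<in> {c1, c2, c3}" "j \<in> {c1, c2, c3}" for i j
    using that c by (intro ext) blast
  show ?thesis
    by (rule reduced_at_if_reduced_triple[of c1 c2 c3 "linform (act g4 g5 A)", OF distinct antisym reduced])
qed

lemma congr_normal_form_unitriangular3_column_zero:
  assumes o: "c1 < c2" "c2 < c3"
    and c: "c1 \<in> {1..5} - {a, b}" "c2 \<in> {1..5} - {a, b}" "c3 \<in> {1..5} - {a, b}"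
    and normal: "\<forall>i\<in>{1..5}. \<forall>j\<in>{1..5}.
      congr 5 g0 M i j = \<mu> * wedge (\<lambda>i. of_bool (i = a)) (\<lambda>j. of_bool (j = b)) i j"
    and d: "d \<in> {c1, c2, c3}"
  shows "congr 5 (matmul 5 (unitriangular3 c1 c2 c3 x y z) g0) M i d = 0"
proof -
  have "\<forall>k\<in>{1..5}. congr 5 g0 M k c1 = 0 \<and> congr 5 g0 M k c2 = 0 \<and> congr 5 g0 M k c3 = 0"
    using normal c by (auto simp: wedge_def)
  moreover have "c1 \<in> {1..5}" "c2 \<in> {1..5}" "c3 \<in> {1..5}" using c by auto
  ultimately show ?thesis
    unfolding congr_matmul using congr_unitriangular3_column_zero[OF o] d by blast
qed

lemma exists_reducing_congruence_nonzero:
  assumes alt: "\<forall>k\<in>{1..4}. alternating5 (A k)"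
    and pt: "on_pfaff_scheme A p" and tan: "tangent_pos_dim A p"
    and nonzero: "\<exists>i\<in>{1..5}. \<exists>j\<in>{1..5}. linform A i j p \<noteq> 0"
  shows "\<exists>g5 I J L. unipotent_lower 5 g5 \<and> I \<in> {1..5} \<and> J \<in> {1..5} \<and> L \<in> {1..5} \<and>
    I \<noteq> J \<and> I \<noteq> L \<and> J \<noteq> L \<and>
    (\<forall>i\<in>{1..5}. congr 5 g5 (pencil A p) i I = 0 \<and> congr 5 g5 (pencil A p) i J = 0 \<and>
      congr 5 g5 (pencil A p) i L = 0) \<and>
    reduced_at (linform (act g4 g5 A)) I J L"
proof -
  have rank: "\<forall>i\<in>{1..5}. \<forall>j\<in>{1..5}. \<forall>k\<in>{1..5}. \<forall>l\<in>{1..5}. pf4 (pencil A p) i j k l = 0"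
    using on_pfaff_scheme_pf4_polar[OF alt pt] by (simp add: pf4_polar_self)
  obtain a b g0 where ab: "a \<in> {1..5}" "b \<in> {1..5}" "a < b" and g0: "unipotent_lower 5 g0"
    and normal: "\<forall>i\<in>{1..5}. \<forall>j\<in>{1..5}.
      congr 5 g0 (pencil A p) i j = linform A a b p * wedge (\<lambda>i. of_bool (i = a)) (\<lambda>j. of_bool (j = b)) i j"
    and tangent: "\<forall>N c d. c \<in> {1..5} - {a, b} \<longrightarrow> d \<in> {1..5} - {a, b} \<longrightarrow>
      (\<forall>k\<in>{1..5}. \<forall>l\<in>{1..5}. pf4_polar (pencil A p) N a b k l = 0) \<longrightarrow> congr 5 g0 N c d = 0"
    using rank_two_normal_form[OF alternating5_pencil[OF alt] rank nonzero] by blast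
  obtain c1 c2 c3 where o: "c1 < c2" "c2 < c3"
    and c: "c1 \<in> {1..5} - {a, b}" "c2 \<in> {1..5} - {a, b}" "c3 \<in> {1..5} - {a, b}"
    using exists_three_outside_pair[OF ab] by blast
  have c5: "c1 \<in> {1..5}" "c2 \<in> {1..5}" "c3 \<in> {1..5}" using c by auto
  obtain \<alpha> \<beta> \<gamma> where nontrivial: "\<alpha> \<noteq> 0 \<or> \<beta> \<noteq> 0 \<or> \<gamma> \<noteq> 0"
    and dep: "\<forall>x. \<alpha> * linform (act g4 g0 A) c2 c3 x + \<beta> * linform (act g4 g0 A) c1 c3 x
      + \<gamma> * linform (act g4 g0 A) c1 c2 x = 0"
    using tangent_forms_dependent[OF alt tan ab(1,2) tangent c] by blast
  have "\<forall>k\<in>{1..4}. alternating5 (act g4 g0 A k)"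
    using alternating5_act[OF alt] by blast
  from exists_unitriangular3_reduced[OF o c5 this nontrivial dep]
  obtain x y z where reduced: "reduced_triple
      (linform (\<lambda>k. congr 5 (unitriangular3 c1 c2 c3 x y z) (act g4 g0 A k)) c2 c3)
      (linform (\<lambda>k. congr 5 (unitriangular3 c1 c2 c3 x y z) (act g4 g0 A k)) c1 c3)
      (linform (\<lambda>k. congr 5 (unitriangular3 c1 c2 c3 x y z) (act g4 g0 A k)) c1 c2)"
    by blast
  define g5 where "g5 = matmul 5 (unitriangular3 c1 c2 c3 x y z) g0"
  have B: "act g4 g5 A = (\<lambda>k. congr 5 (unitriangular3 c1 c2 c3 x y z) (act g4 g0 A k))"
    unfolding g5_def by (simp add: fun_eq_iff act_matmul)
  have distinct: "c1 \<noteq> c2" "c1 \<noteq> c3" "c2 \<noteq> c3" using o by simp_all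
  have "reduced_triple (linform (act g4 g5 A) c2 c3) (linform (act g4 g5 A) c1 c3)
      (linform (act g4 g5 A) c1 c2)"
    using reduced unfolding B .
  from exists_reduced_at_act[OF alt c5 distinct this]
  obtain I J L where IJL: "{I, J, L} = {c1, c2, c3}" "I \<noteq> J" "I \<noteq> L" "J \<noteq> L"
    and forms: "reduced_at (linform (act g4 g5 A)) I J L"
    by blast
  have column_zero: "congr 5 g5 (pencil A p) i d = 0" if "d \<in> {c1, c2, c3}" for i d
    unfolding g5_def by (rule congr_normal_form_unitriangular3_column_zero[OF o c normal that])
  have IJL_c: "I \<in> {c1, c2, c3}" "J \<in> {c1, c2, c3}" "L \<in> {c1, c2, c3}"
    unfolding IJL(1)[symmetric] by simp_all
  then have IJL5: "I \<in> {1..5}" "J \<in> {1..5}" "L \<in> {1..5}"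
    using c5 by auto
  have g5_unipotent: "unipotent_lower 5 g5"
    unfolding g5_def by (rule unipotent_lower_matmul[OF unipotent_lower_unitriangular3[OF o] g0])
  show ?thesis
    by (rule exI[of _ g5], rule exI[of _ I], rule exI[of _ J], rule exI[of _ L])
      (use g5_unipotent IJL5 IJL(2-4) column_zero[OF IJL_c(1)] column_zero[OF IJL_c(2)]
        column_zero[OF IJL_c(3)] forms in simp)
qed

lemma exists_reducing_congruence:
  assumes alt: "\<forall>k\<in>{1..4}. alternating5 (A k)"
    and pt: "on_pfaff_scheme A p" and tan: "tangent_pos_dim A p"
    and row: "\<forall>l\<in>{1..4}. g4 K l = p l / p K" "p K \<noteq> 0"
  shows "\<exists>g5 I J L. unipotent_lower 5 g5 \<and> I \<in> {1..5} \<and> J \<in> {1..5} \<and> L \<in> {1..5} \<and>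
    I \<noteq> J \<and> I \<noteq> L \<and> J \<noteq> L \<and>
    (\<forall>i\<in>{1..5}. act g4 g5 A K i I = 0 \<and> act g4 g5 A K i J = 0 \<and> act g4 g5 A K i L = 0) \<and>
    ((\<forall>i\<in>{1..5}. \<forall>j\<in>{1..5}. act g4 g5 A K i j = 0) \<or> reduced_at (linform (act g4 g5 A)) I J L)"
proof (cases "\<exists>i\<in>{1..5}. \<exists>j\<in>{1..5}. linform A i j p \<noteq> 0")
  case True
  then show ?thesis
    using exists_reducing_congruence_nonzero[OF alt pt tan True, of g4] row(2)
    by (simp add: act_row_proportional[of g4 K p "p K", OF row(1)]) blast
next
  case False
  have id5: "unipotent_lower 5 (\<lambda>i j. of_bool (i = j))" by (simp add: unipotent_lower_def)
  have zero: "act g4 (\<lambda>i j. of_bool (i = j)) A K i j = 0" for i j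
    unfolding act_row_proportional[of g4 K p "p K", OF row(1)] congr_def using False by (simp add: sum.neutral)
  show ?thesis
    by (rule exI[of _ "\<lambda>i j. of_bool (i = j)"], rule exI[of _ 1], rule exI[of _ 2], rule exI[of _ 3])
      (use id5 zero in simp)
qed

theorem lemma4p5:
  fixes A :: "nat \<Rightarrow> nat \<Rightarrow> nat \<Rightarrow> complex" and p :: "nat \<Rightarrow> complex"
  assumes alt: "\<forall>k\<in>{1..4}. alternating5 (A k)"
    and pt: "on_pfaff_scheme A p"
    and tan: "tangent_pos_dim A p"
  shows "\<exists>g4 g5 K I J L. unipotent_lower 4 g4 \<and> unipotent_lower 5 g5 \<and>
     K \<in> {1..4} \<and> I \<in> {1..5} \<and> J \<in> {1..5} \<and> L \<in> {1..5} \<and>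
     I \<noteq> J \<and> I \<noteq> L \<and> J \<noteq> L \<and>
     (let B = act g4 g5 A in
       (\<forall>i\<in>{1..5}. \<forall>j\<in>{1..5}. B K i j = 0)
       \<or>
       ((\<forall>k\<in>{1..4}. \<exists>i\<in>{1..5}. \<exists>j\<in>{1..5}. B k i j \<noteq> 0) \<and>
        (\<forall>i\<in>{1..5}. B K i I = 0 \<and> B K i J = 0 \<and> B K i L = 0) \<and>
        ((\<forall>x. linform B I L x = 0) \<and> (\<forall>x. linform B J L x = 0)
         \<or>
         (\<forall>x. linform B I J x = 0) \<and>
         (\<forall>a b. (\<forall>x. a * linform B I L x + b * linform B J L x = 0) \<longrightarrow> a = 0 \<and> b = 0))))"
proof -
  obtain K g4 where K: "K \<in> {1..4}" "p K \<noteq> 0" and g4: "unipotent_lower 4 g4"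
    and row: "\<forall>l\<in>{1..4}. g4 K l = p l / p K"
    using exists_unipotent_row_proportional[of 4 p] pt unfolding on_pfaff_scheme_def by blast
  obtain g5 I J L where g5: "unipotent_lower 5 g5"
    and IJL: "I \<in> {1..5}" "J \<in> {1..5}" "L \<in> {1..5}" "I \<noteq> J" "I \<noteq> L" "J \<noteq> L"
    and columns: "\<forall>i\<in>{1..5}. act g4 g5 A K i I = 0 \<and> act g4 g5 A K i J = 0 \<and> act g4 g5 A K i L = 0"
    and alternative: "(\<forall>i\<in>{1..5}. \<forall>j\<in>{1..5}. act g4 g5 A K i j = 0) \<or> reduced_at (linform (act g4 g5 A)) I J L"
    using exists_reducing_congruence[of A p g4 K, OF alt pt tan row K(2)] by blast
  show ?thesis
  proof (cases "\<exists>k\<in>{1..4}. \<forall>i\<in>{1..5}. \<forall>j\<in>{1..5}. act g4 g5 A k i j = 0")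
    case True
    then obtain k where "k \<in> {1..4}" "\<forall>i\<in>{1..5}. \<forall>j\<in>{1..5}. act g4 g5 A k i j = 0"
      by blast
    then show ?thesis
      unfolding Let_def using g4 g5 IJL by blast
  next
    case False
    then have "\<forall>k\<in>{1..4}. \<exists>i\<in>{1..5}. \<exists>j\<in>{1..5}. act g4 g5 A k i j \<noteq> 0"
      and "reduced_at (linform (act g4 g5 A)) I J L"
      using alternative K(1) by blast+
    then show ?thesis
      unfolding Let_def reduced_at_def lin_indep2_def using g4 g5 K(1) IJL columns by blast
  qed
qed

end
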